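(* Let $(G,\varepsilon_G)$ be a graded Lie group with $\mathcal G(G)\neq\emptyset$, $Z\subseteq Z(G^\uparrow)$ a closed subgroup which is normal in $G$, $q\colon G\to\underline G=G/Z$ the quotient map and notation as in the context. Fix $W=(x,\sigma)\in\mathcal G(G)$, $\underline W=(x,q(\sigma))$ and $\mathcal W_+=G^\uparrow.W$. Then for each $\alpha\in Z^-$: (a) for every $W_1=(x_1,\sigma_1)\in\mathcal G(G)$, $q_{\mathcal G}(W_1^{'\alpha})=(-x_1,q(\sigma_1))$; (b) if $\alpha^2\neq e$, the map $W_1\mapsto W_1^{'\alpha}$ is not involutive; (c) the map $\mathcal G(G)\to\mathcal G(G)$, $(x_1,\sigma_1)\mapsto(-x_1,\alpha\sigma_1)$ is $G^\uparrow$-equivariant; (d) $W_1^{'\alpha}=\alpha*W_1'$ for $W_1\in\mathcal G(G)$; (e) $*_\alpha$ defines an action of $G$ on $\mathcal G(G)$ satisfying $W_1^{'\alpha}=\sigma_1*_\alpha W_1$ for $W_1=(x_1,\sigma_1)\in\mathcal G(G)$; if $W^{'\alpha}\in G^\uparrow.W$, then $\mathcal W_+$ is invariant under $G$ for the action $*_\alpha$; (f) there exists $\alpha\in Z^-$ with $W^{'\alpha}\in\mathcal W_+$ if and only if $(-x,q(\sigma))\in q(G^\uparrow).\underline W$; if this holds for $\alpha$, then for $\beta\in Z^-$ one has $W^{'\beta}\in\mathcal W_+$ if and only if $\beta^{-1}\alpha\in Z_2$, and in this case the twisted actions of $g\in G^\downarrow$ are related by $g*_\beta=(\beta\alpha^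{-1})*g*_\alpha$.
   Context: $G$ is a finite-dimensional Lie group with Lie algebra $\mathfrak g$ and continuous homomorphism $\varepsilon_G\colon G\to\{\pm1\}$, $G^\uparrow=\ker\varepsilon_G$, $G^\downarrow=G\setminus G^\uparrow$. For a graded Lie group $H$ (here $G$ or $\underline G$ with grading induced from $G$), $\mathcal G(H)=\{(x,\tau)\in\mathfrak g\times H^\downarrow:\tau^2=e,\operatorname{Ad}_{\mathfrak g}(\tau)x=x\}$ with action $h.(x,\tau)=(\varepsilon(h)\operatorname{Ad}_{\mathfrak g}(h)x,h\tau h^{-1})$ (for $\underline G$, $\operatorname{Ad}_{\mathfrak g}$ is the factorized adjoint action, which exists since $Z$ acts trivially on $\mathfrak g$). $q_{\mathcal G}\colon\mathcal G(G)\to\mathcal G(\underline G)$, $(x,\sigma)\mapsto(x,q(\sigma))$. For $W_1=(x_1,\sigma_1)\in\mathcal G(G)$, $W_1'=(-x_1,\sigma_1)$. $Z^-=\{\gamma\in Z:\sigma\gamma\sigma=\gamma^{-1}\}$ (independent of the choice of $\sigma\in G^\downarrow$). For $\alpha\in Z^-$: $\alpha*(x_1,\sigma_1)=(x_1,\alpha\sigma_1)$ (an action of $Z^-$ on $\mathcal G(G)$); the $\alpha$-twisted complement is $W_1^{'\alpha}=(-x_1,\alpha\sigma_1)$; the twisted action is $g*_\alpha W_1=g.W_1$ for $g\in G^\uparrow$ and $g*_\alpha W_1=g.(\alpha^{-1}*W_1)=\alpha*(g.W_1)$ for $g\in G^\downarrow$. Further $G^\uparrow_{\underline W}=\{g\in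 G^\uparrow:q(g).\underline W=\underline W\}$, $\partial\colon G^\uparrow_{\underline W}\to Z^-$, $\partial(g)=g\sigma g^{-1}\sigma$, and $Z_2=\partial(G^\uparrow_{\underline W})$. *)

theory Defs
  imports "HOL-Analysis.Analysis" "HOL-Algebra.Group_Action"
begin

text \<open>Abstract rendering of a graded (Lie) group: a group H (HOL-Algebra),
a grading eps with values in {1,-1} (as reals), and the adjoint action
Ad of H on the Lie algebra, a real vector space of type 'v.\<close>

definition Gup :: "('g,'m) monoid_scheme \<Rightarrow> ('g \<Rightarrow> real) \<Rightarrow> 'g set" where
  "Gup H eps = {g \<in> carrier H. eps g = 1}"

definition Gdown :: "('g,'m) monoid_scheme \<Rightarrow> ('g \<Rightarrow> real) \<Rightarrow> 'g set" where
  "Gdown H eps = carrier H - Gup H eps"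

definition GPairs :: "('g,'m) monoid_scheme \<Rightarrow> ('g \<Rightarrow> real) \<Rightarrow> ('g \<Rightarrow> 'v \<Rightarrow> 'v)
    \<Rightarrow> ('v \<times> 'g) set" where
  "GPairs H eps Ad = {(x, \<tau>). \<tau> \<in> Gdown H eps \<and> \<tau> \<otimes>\<^bsub>H\<^esub> \<tau> = \<one>\<^bsub>H\<^esub> \<and> Ad \<tau> x = x}"

definition gact :: "('g,'m) monoid_scheme \<Rightarrow> ('g \<Rightarrow> real) \<Rightarrow> ('g \<Rightarrow> 'v::real_vector \<Rightarrow> 'v)
    \<Rightarrow> 'g \<Rightarrow> 'v \<times> 'g \<Rightarrow> 'v \<times> 'g" where
  "gact H eps Ad h W = (eps h *\<^sub>R Ad h (fst W), h \<otimes>\<^bsub>H\<^esub> snd W \<otimes>\<^bsub>H\<^esub> inv\<^bsub>H\<^esub> h)"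

definition qmap :: "('g,'m) monoid_scheme \<Rightarrow> 'g set \<Rightarrow> 'g \<Rightarrow> 'g set" where
  "qmap G Z g = Z #>\<^bsub>G\<^esub> g"

definition eps_q :: "('g \<Rightarrow> real) \<Rightarrow> 'g set \<Rightarrow> real" where
  "eps_q eps C = eps (SOME g. g \<in> C)"

definition Ad_q :: "('g \<Rightarrow> 'v \<Rightarrow> 'v) \<Rightarrow> 'g set \<Rightarrow> 'v \<Rightarrow> 'v" where
  "Ad_q Ad C = Ad (SOME g. g \<in> C)"

definition qG :: "('g,'m) monoid_scheme \<Rightarrow> 'g set \<Rightarrow> 'v \<times> 'g \<Rightarrow> 'v \<times> 'g set" where
  "qG G Z W = (fst W, qmap G Z (snd W))"

definition Zminus :: "('g,'m) monoid_scheme \<Rightarrow> 'g set \<Rightarrow> 'g \<Rightarrow> 'g set" where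
  "Zminus G Z \<sigma> = {\<gamma> \<in> Z. \<sigma> \<otimes>\<^bsub>G\<^esub> \<gamma> \<otimes>\<^bsub>G\<^esub> \<sigma> = inv\<^bsub>G\<^esub> \<gamma>}"

definition zstar :: "('g,'m) monoid_scheme \<Rightarrow> 'g \<Rightarrow> 'v \<times> 'g \<Rightarrow> 'v \<times> 'g" where
  "zstar G \<alpha> W = (fst W, \<alpha> \<otimes>\<^bsub>G\<^esub> snd W)"

definition compl :: "'v::real_vector \<times> 'g \<Rightarrow> 'v \<times> 'g" where
  "compl W = (- fst W, snd W)"

definition tcompl :: "('g,'m) monoid_scheme \<Rightarrow> 'g \<Rightarrow> 'v::real_vector \<times> 'g \<Rightarrow> 'v \<times> 'g" where
  "tcompl G \<alpha> W = (- fst W, \<alpha> \<otimes>\<^bsub>G\<^esub> snd W)"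

definition tact :: "('g,'m) monoid_scheme \<Rightarrow> ('g \<Rightarrow> real) \<Rightarrow> ('g \<Rightarrow> 'v::real_vector \<Rightarrow> 'v)
    \<Rightarrow> 'g \<Rightarrow> 'g \<Rightarrow> 'v \<times> 'g \<Rightarrow> 'v \<times> 'g" where
  "tact G eps Ad \<alpha> g W =
     (if g \<in> Gup G eps then gact G eps Ad g W
      else gact G eps Ad g (zstar G (inv\<^bsub>G\<^esub> \<alpha>) W))"

definition GupStab :: "('g,'m) monoid_scheme \<Rightarrow> ('g \<Rightarrow> real) \<Rightarrow> ('g \<Rightarrow> 'v::real_vector \<Rightarrow> 'v)
    \<Rightarrow> 'g set \<Rightarrow> 'v \<times> 'g set \<Rightarrow> 'g set" where
  "GupStab G eps Ad Z Wq =
     {g \<in> Gup G eps. gact (G Mod Z) (eps_q eps) (Ad_q Ad) (qmap G Z g) Wq = Wq}"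

definition bdry :: "('g,'m) monoid_scheme \<Rightarrow> 'g \<Rightarrow> 'g \<Rightarrow> 'g" where
  "bdry G \<sigma> g = g \<otimes>\<^bsub>G\<^esub> \<sigma> \<otimes>\<^bsub>G\<^esub> inv\<^bsub>G\<^esub> g \<otimes>\<^bsub>G\<^esub> \<sigma>"

end

theory Submission
  imports Defs
begin

text \<open>
  For even k one has k \<sigma> k^-1 = \<partial>(k) \<sigma>, so k.(x, \<sigma>) = (Ad k x, \<partial>(k) \<sigma>). Hence the
  twisted complement (-x, \<gamma> \<sigma>) lies in the even orbit of W exactly when some even k
  reverses x and has \<partial>(k) = \<gamma>, whereas the corresponding condition in the quotient only
  asks for \<partial>(k) \<in> Z; every such \<partial>(k) lies in Z^-. On elements with \<partial> in Z the map \<partial> is an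
  anti-homomorphism, so two admissible twists differ by \<partial> of a stabiliser element, i.e. by
  an element of Z_2. The twisted action is an action because every odd h satisfies
  h \<gamma> = \<gamma>^-1 h for \<gamma> \<in> Z^-, which exactly cancels the twist when two odd elements compose.
\<close>

lemma group_action_restrictI:
  fixes G (structure)
  assumes "group G"
    and closed: "\<And>g y. g \<in> carrier G \<Longrightarrow> y \<in> E \<Longrightarrow> f g y \<in> E"
    and one: "\<And>y. y \<in> E \<Longrightarrow> f \<one> y = y"
    and mult: "\<And>g h y. g \<in> carrier G \<Longrightarrow> h \<in> carrier G \<Longrightarrow> y \<in> E \<Longrightarrow>
                 f (g \<otimes> h) y = f g (f h y)"
  shows "group_action G E (\<lambda>g. restrict (f g) E)"
proof -
  interpret group G by fact
  have Bij: "restrict (f g) E \<in> Bij E" if g: "g \<in> carrier G" for g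
  proof -
    have "bij_betw (f g) E E"
    proof (rule bij_betwI[where g = "f (inv g)"])
      show "f g \<in> E \<rightarrow> E" "f (inv g) \<in> E \<rightarrow> E" using closed g by auto
      show "f (inv g) (f g y) = y" "f g (f (inv g) y) = y" if "y \<in> E" for y
        using mult[of "inv g" g y] mult[of g "inv g" y] one that g by simp_all
    qed
    then show ?thesis by (simp add: Bij_def)
  qed
  have "restrict (f (g \<otimes> h)) E = compose E (restrict (f g) E) (restrict (f h) E)"
    if "g \<in> carrier G" "h \<in> carrier G" for g h
    using that closed mult by (auto simp: compose_def)
  then show ?thesis
    unfolding group_action_def
    by (intro group_hom.intro group_hom_axioms.intro homI group_BijGroup)
       (auto simp: BijGroup_def Bij)
qed

lemma gact_Pair: "gact H eps Ad h (y, \<tau>) = (eps h *\<^sub>R Ad h y, h \<otimes>\<^bsub>H\<^esub> \<tau> \<otimes>\<^bsub>H\<^esub> inv\<^bsub>H\<^esub> h)"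
  by (simp add: gact_def)

lemma zstar_Pair: "zstar H a (y, \<tau>) = (y, a \<otimes>\<^bsub>H\<^esub> \<tau>)"
  by (simp add: zstar_def)

lemma tcompl_eq_zstar_compl: "tcompl H a W = zstar H a (compl W)"
  by (simp add: tcompl_def zstar_def compl_def)

section \<open>Graded groups acting on the Lie algebra\<close>

locale graded_group = group G for G :: "('g, 'm) monoid_scheme" (structure) +
  fixes eps :: "'g \<Rightarrow> real" and Ad :: "'g \<Rightarrow> 'v::real_vector \<Rightarrow> 'v"
  assumes eps_val: "\<forall>g\<in>carrier G. eps g = 1 \<or> eps g = -1"
    and eps_hom: "\<forall>g\<in>carrier G. \<forall>h\<in>carrier G. eps (g \<otimes> h) = eps g * eps h"
    and Ad_lin: "\<forall>g\<in>carrier G. linear (Ad g)"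
    and Ad_one: "Ad \<one> = id"
    and Ad_hom: "\<forall>g\<in>carrier G. \<forall>h\<in>carrier G. Ad (g \<otimes> h) = Ad g \<circ> Ad h"
begin

lemma eps_mult: "g \<in> carrier G \<Longrightarrow> h \<in> carrier G \<Longrightarrow> eps (g \<otimes> h) = eps g * eps h"
  using eps_hom by blast

lemma eps_one: "eps \<one> = 1"
  using eps_mult[of \<one> \<one>] eps_val by force

lemma eps_inv: "g \<in> carrier G \<Longrightarrow> eps (inv g) = eps g"
  using eps_mult[of g "inv g"] eps_one eps_val by force

lemma eps_Gdown: "g \<in> carrier G \<Longrightarrow> eps g \<noteq> 1 \<Longrightarrow> eps g = -1"
  using eps_val by blast

lemma Gup_iff: "g \<in> Gup G eps \<longleftrightarrow> g \<in> carrier G \<and> eps g = 1"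
  by (simp add: Gup_def)

lemma Gdown_iff: "g \<in> Gdown G eps \<longleftrightarrow> g \<in> carrier G \<and> eps g = -1"
  using eps_val by (auto simp: Gdown_def Gup_def)

lemma GPairs_iff:
  "(y, \<tau>) \<in> GPairs G eps Ad \<longleftrightarrow> \<tau> \<in> carrier G \<and> eps \<tau> = -1 \<and> \<tau> \<otimes> \<tau> = \<one> \<and> Ad \<tau> y = y"
  by (auto simp: GPairs_def Gdown_iff)

lemma GPairs_snd_carrier: "W \<in> GPairs G eps Ad \<Longrightarrow> snd W \<in> carrier G"
  by (cases W) (simp add: GPairs_iff)

lemma Ad_mult: "g \<in> carrier G \<Longrightarrow> h \<in> carrier G \<Longrightarrow> Ad (g \<otimes> h) v = Ad g (Ad h v)"
  using Ad_hom by simp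

lemma Ad_inv_cancel: "g \<in> carrier G \<Longrightarrow> Ad (inv g) (Ad g v) = v"
  using Ad_mult[of "inv g" g v] Ad_one by simp

lemma Ad_minus: "g \<in> carrier G \<Longrightarrow> Ad g (- v) = - Ad g v"
  using Ad_lin linear_neg by blast

lemma Ad_scaleR: "g \<in> carrier G \<Longrightarrow> Ad g (c *\<^sub>R v) = c *\<^sub>R Ad g v"
  using Ad_lin linear_scale by blast

lemma gact_closed:
  assumes g: "g \<in> carrier G" and W: "W \<in> GPairs G eps Ad"
  shows "gact G eps Ad g W \<in> GPairs G eps Ad"
proof -
  obtain y \<tau> where W_eq: "W = (y, \<tau>)" by (cases W)
  have \<tau>: "\<tau> \<in> carrier G" "eps \<tau> = -1" "\<tau> \<otimes> \<tau> = \<one>" "Ad \<tau> y = y"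
    using W W_eq by (auto simp: GPairs_iff)
  have "eps (g \<otimes> \<tau> \<otimes> inv g) = - (eps g * eps g)"
    using g \<tau> by (simp add: eps_mult eps_inv)
  also have "eps g * eps g = 1" using eps_val g by auto
  finally have eps_conj: "eps (g \<otimes> \<tau> \<otimes> inv g) = -1" by simp
  have "(g \<otimes> \<tau> \<otimes> inv g) \<otimes> (g \<otimes> \<tau> \<otimes> inv g) = g \<otimes> (\<tau> \<otimes> \<tau>) \<otimes> inv g"
    using g \<tau> by (simp add: m_assoc[symmetric]) (simp add: m_assoc)
  then have sq_conj: "(g \<otimes> \<tau> \<otimes> inv g) \<otimes> (g \<otimes> \<tau> \<otimes> inv g) = \<one>"
    using g \<tau> by simp
  have "Ad (g \<otimes> \<tau> \<otimes> inv g) (eps g *\<^sub>R Ad g y) = eps g *\<^sub>R Ad g y"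
    using g \<tau> by (simp add: Ad_mult Ad_scaleR Ad_inv_cancel)
  then show ?thesis
    using W_eq g \<tau> eps_conj sq_conj by (simp add: gact_Pair GPairs_iff)
qed

lemma gact_mult:
  assumes "g \<in> carrier G" "h \<in> carrier G" "snd W \<in> carrier G"
  shows "gact G eps Ad (g \<otimes> h) W = gact G eps Ad g (gact G eps Ad h W)"
  using assms
  by (cases W) (simp add: gact_Pair eps_mult Ad_mult Ad_scaleR m_assoc inv_mult_group)

lemma gact_one: "snd W \<in> carrier G \<Longrightarrow> gact G eps Ad \<one> W = W"
  by (cases W) (simp add: gact_Pair eps_one Ad_one)

lemma compl_closed: "W \<in> GPairs G eps Ad \<Longrightarrow> compl W \<in> GPairs G eps Ad"
  by (cases W) (auto simp: compl_def GPairs_iff Ad_minus)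

lemma compl_gact_Gup:
  "g \<in> carrier G \<Longrightarrow> eps g = 1 \<Longrightarrow> compl (gact G eps Ad g W) = gact G eps Ad g (compl W)"
  by (cases W) (simp add: compl_def gact_Pair Ad_minus)

lemma tcompl_tcompl_eq_iff:
  "a \<in> carrier G \<Longrightarrow> \<tau> \<in> carrier G \<Longrightarrow> tcompl G a (tcompl G a (y, \<tau>)) = (y, \<tau>) \<longleftrightarrow> a \<otimes> a = \<one>"
  using right_cancel[of \<tau> "a \<otimes> a" \<one>] by (auto simp: tcompl_def m_assoc[symmetric])

end

section \<open>Quotients by a central subgroup of the even part\<close>

locale graded_group_mod_central = graded_group +
  fixes Z
  assumes Z_sub: "Z \<subseteq> Gup G eps"
    and Z_central: "\<forall>z\<in>Z. \<forall>g\<in>Gup G eps. z \<otimes> g = g \<otimes> z"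
    and Z_normal: "Z \<lhd> G"
    and Z_Ad_triv: "\<forall>z\<in>Z. Ad z = id"
begin

abbreviation qact where
  "qact g \<equiv> gact (G Mod Z) (eps_q eps) (Ad_q Ad) (qmap G Z g)"

lemma Z_subgroup: "subgroup Z G"
  using Z_normal normal_imp_subgroup by blast

lemma Z_carrier: "z \<in> Z \<Longrightarrow> z \<in> carrier G"
  using Z_sub by (auto simp: Gup_def)

lemma Z_eps: "z \<in> Z \<Longrightarrow> eps z = 1"
  using Z_sub by (auto simp: Gup_def)

lemma Z_inv_closed: "z \<in> Z \<Longrightarrow> inv z \<in> Z"
  using Z_subgroup subgroup.m_inv_closed by fastforce

lemma Z_mult_closed: "z \<in> Z \<Longrightarrow> w \<in> Z \<Longrightarrow> z \<otimes> w \<in> Z"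
  using Z_subgroup subgroup.m_closed by fastforce

lemma Z_commute: "z \<in> Z \<Longrightarrow> g \<in> carrier G \<Longrightarrow> eps g = 1 \<Longrightarrow> z \<otimes> g = g \<otimes> z"
  using Z_central by (auto simp: Gup_def)

lemma Z_commute_Z: "z \<in> Z \<Longrightarrow> w \<in> Z \<Longrightarrow> z \<otimes> w = w \<otimes> z"
  using Z_commute Z_carrier Z_eps by blast

lemma rcos_eq_iff:
  assumes a: "a \<in> carrier G" and b: "b \<in> carrier G"
  shows "Z #> a = Z #> b \<longleftrightarrow> a \<otimes> inv b \<in> Z"
proof -
  have "Z #> a = Z #> b \<longleftrightarrow> a \<in> Z #> b"
    using repr_independence[OF _ b Z_subgroup] repr_independenceD[OF Z_subgroup a, of b] by blast
  also have "\<dots> \<longleftrightarrow> a \<otimes> inv b \<in> Z"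
    using subgroup.rcos_module[OF Z_subgroup is_group b a] .
  finally show ?thesis .
qed

text \<open>eps_q and Ad_q evaluate at an arbitrary representative of the coset; they are
  well defined because Z is even and acts trivially on the Lie algebra.\<close>

lemma some_rcos: "g \<in> carrier G \<Longrightarrow> \<exists>z\<in>Z. (SOME y. y \<in> Z #> g) = z \<otimes> g"
  using someI[of "\<lambda>y. y \<in> Z #> g", OF rcos_self[OF _ Z_subgroup]] by (auto simp: r_coset_def)

lemma eps_q_rcos: "g \<in> carrier G \<Longrightarrow> eps_q eps (Z #> g) = eps g"
  using some_rcos[of g] by (auto simp: eps_q_def eps_mult Z_carrier Z_eps)

lemma Ad_q_rcos: "g \<in> carrier G \<Longrightarrow> Ad_q Ad (Z #> g) = Ad g"
  using some_rcos[of g] Ad_hom Z_Ad_triv by (auto simp: Ad_q_def Z_carrier)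

lemma qact_Pair:
  assumes g: "g \<in> carrier G" and \<tau>: "\<tau> \<in> carrier G"
  shows "qact g (y, qmap G Z \<tau>) = (eps g *\<^sub>R Ad g y, qmap G Z (g \<otimes> \<tau> \<otimes> inv g))"
proof -
  have "Z #> g \<in> carrier (G Mod Z)"
    using g Z_carrier by (auto simp: FactGroup_def intro!: rcosetsI)
  then have "inv\<^bsub>G Mod Z\<^esub> (Z #> g) = Z #> inv g"
    using normal.inv_FactGroup[OF Z_normal] normal.rcos_inv[OF Z_normal g] by simp
  moreover have "(Z #> g) \<otimes>\<^bsub>G Mod Z\<^esub> (Z #> \<tau>) \<otimes>\<^bsub>G Mod Z\<^esub> (Z #> inv g) = Z #> (g \<otimes> \<tau> \<otimes> inv g)"
    using normal.rcos_sum[OF Z_normal] g \<tau> by simp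
  ultimately show ?thesis
    using eps_q_rcos[OF g] Ad_q_rcos[OF g] by (simp add: gact_def qmap_def)
qed

lemma zstar_gact_Gup:
  assumes "a \<in> Z" "g \<in> carrier G" "eps g = 1" "snd W \<in> carrier G"
  shows "zstar G a (gact G eps Ad g W) = gact G eps Ad g (zstar G a W)"
  using assms Z_commute[of a g] Z_carrier[of a]
  by (cases W) (simp add: zstar_Pair gact_Pair m_assoc[symmetric])

lemma qG_tcompl:
  assumes "a \<in> Z" "\<sigma>1 \<in> carrier G"
  shows "qG G Z (tcompl G a (x1, \<sigma>1)) = (- x1, qmap G Z \<sigma>1)"
  using assms rcos_eq_iff[of "a \<otimes> \<sigma>1" \<sigma>1] Z_carrier[of a]
  by (simp add: qG_def tcompl_def qmap_def m_assoc)

lemma tcompl_gact_Gup: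
  assumes "a \<in> Z" "g \<in> carrier G" "eps g = 1" "W \<in> GPairs G eps Ad"
  shows "tcompl G a (gact G eps Ad g W) = gact G eps Ad g (tcompl G a W)"
proof -
  have "snd (compl W) \<in> carrier G"
    using GPairs_snd_carrier[OF assms(4)] by (simp add: compl_def)
  then show ?thesis
    using assms by (simp add: tcompl_eq_zstar_compl compl_gact_Gup zstar_gact_Gup)
qed

end

section \<open>The twisted complement and the twisted action at a base point\<close>

locale pointed_graded_group = graded_group_mod_central +
  fixes x \<sigma>
  assumes base_point: "(x, \<sigma>) \<in> GPairs G eps Ad"
begin

abbreviation Wplus where
  "Wplus \<equiv> (\<lambda>g. gact G eps Ad g (x, \<sigma>)) ` Gup G eps"

lemma sigma: "\<sigma> \<in> carrier G" "eps \<sigma> = -1" "\<sigma> \<otimes> \<sigma> = \<one>" "Ad \<sigma> x = x"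
  using base_point by (auto simp: GPairs_iff)

lemma sigma_inv: "inv \<sigma> = \<sigma>"
  using inv_equality[of \<sigma> \<sigma>] sigma by simp

lemma sigma_cancel: "b \<in> carrier G \<Longrightarrow> \<sigma> \<otimes> (\<sigma> \<otimes> b) = b"
  using sigma by (simp add: m_assoc[symmetric])

lemma Zminus_iff: "\<gamma> \<in> Zminus G Z \<sigma> \<longleftrightarrow> \<gamma> \<in> Z \<and> \<sigma> \<otimes> \<gamma> \<otimes> \<sigma> = inv \<gamma>"
  by (simp add: Zminus_def)

lemma Zminus_carrier: "\<gamma> \<in> Zminus G Z \<sigma> \<Longrightarrow> \<gamma> \<in> carrier G"
  using Z_carrier by (simp add: Zminus_iff)

lemma Zminus_swap:
  assumes \<gamma>: "\<gamma> \<in> Zminus G Z \<sigma>" and h: "h \<in> carrier G" "eps h = -1"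
  shows "h \<otimes> \<gamma> = inv \<gamma> \<otimes> h"
proof -
  have \<gamma>Z: "\<gamma> \<in> Z" and \<gamma>_carrier: "\<gamma> \<in> carrier G" and \<sigma>\<gamma>\<sigma>: "\<sigma> \<otimes> \<gamma> \<otimes> \<sigma> = inv \<gamma>"
    using \<gamma> Z_carrier by (auto simp: Zminus_iff)
  define u where "u = \<sigma> \<otimes> h"
  have u: "u \<in> carrier G" "eps u = 1" "h = \<sigma> \<otimes> u"
    using h sigma by (simp_all add: u_def eps_mult sigma_cancel)
  have "h \<otimes> \<gamma> = \<sigma> \<otimes> (\<gamma> \<otimes> u)"
    using u \<gamma>_carrier sigma Z_commute[OF \<gamma>Z u(1,2)] by (simp add: m_assoc)
  also have "\<dots> = (\<sigma> \<otimes> \<gamma> \<otimes> \<sigma>) \<otimes> (\<sigma> \<otimes> u)"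
    using u \<gamma>_carrier sigma by (simp add: m_assoc sigma_cancel)
  finally show ?thesis
    using \<sigma>\<gamma>\<sigma> u(3) by simp
qed

lemma Zminus_inv_closed:
  assumes \<gamma>: "\<gamma> \<in> Zminus G Z \<sigma>"
  shows "inv \<gamma> \<in> Zminus G Z \<sigma>"
proof -
  have \<gamma>Z: "\<gamma> \<in> Z" and \<gamma>_carrier: "\<gamma> \<in> carrier G" and \<sigma>\<gamma>\<sigma>: "\<sigma> \<otimes> \<gamma> \<otimes> \<sigma> = inv \<gamma>"
    using \<gamma> Z_carrier by (auto simp: Zminus_iff)
  have "\<sigma> \<otimes> inv \<gamma> \<otimes> \<sigma> = inv (\<sigma> \<otimes> \<gamma> \<otimes> \<sigma>)"
    using \<gamma>_carrier sigma by (simp add: inv_mult_group sigma_inv m_assoc)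
  then show ?thesis
    using \<sigma>\<gamma>\<sigma> \<gamma>_carrier Z_inv_closed[OF \<gamma>Z] by (simp add: Zminus_iff)
qed

lemma Zminus_swap_inv:
  "\<gamma> \<in> Zminus G Z \<sigma> \<Longrightarrow> h \<in> carrier G \<Longrightarrow> eps h = -1 \<Longrightarrow> h \<otimes> inv \<gamma> = \<gamma> \<otimes> h"
  using Zminus_swap[OF Zminus_inv_closed] Zminus_carrier by simp

lemma Zminus_mult_closed:
  assumes a: "a \<in> Zminus G Z \<sigma>" and b: "b \<in> Zminus G Z \<sigma>"
  shows "a \<otimes> b \<in> Zminus G Z \<sigma>"
proof -
  have Z: "a \<in> Z" "b \<in> Z" and carrier: "a \<in> carrier G" "b \<in> carrier G"
    using a b Z_carrier by (auto simp: Zminus_iff)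
  have "\<sigma> \<otimes> (a \<otimes> b) \<otimes> \<sigma> = inv a \<otimes> (\<sigma> \<otimes> b \<otimes> \<sigma>)"
    using Zminus_swap[OF a sigma(1,2)] carrier sigma by (simp add: m_assoc[symmetric])
  also have "\<dots> = inv (a \<otimes> b)"
    using b carrier Z_commute_Z[OF Z] by (simp add: Zminus_iff inv_mult_group)
  finally show ?thesis
    using Z_mult_closed[OF Z] by (simp add: Zminus_iff)
qed

lemma zstar_closed:
  assumes a: "a \<in> Zminus G Z \<sigma>" and W: "W \<in> GPairs G eps Ad"
  shows "zstar G a W \<in> GPairs G eps Ad"
proof -
  obtain y \<tau> where W_eq: "W = (y, \<tau>)" by (cases W)
  have \<tau>: "\<tau> \<in> carrier G" "eps \<tau> = -1" "\<tau> \<otimes> \<tau> = \<one>" "Ad \<tau> y = y"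
    using W W_eq by (auto simp: GPairs_iff)
  have a_carrier: "a \<in> carrier G" using Zminus_carrier[OF a] .
  have "(a \<otimes> \<tau>) \<otimes> (a \<otimes> \<tau>) = a \<otimes> (\<tau> \<otimes> a) \<otimes> \<tau>"
    using a_carrier \<tau> by (simp add: m_assoc)
  also have "\<dots> = (a \<otimes> inv a) \<otimes> (\<tau> \<otimes> \<tau>)"
    using Zminus_swap[OF a \<tau>(1,2)] a_carrier \<tau> by (simp add: m_assoc)
  finally have "(a \<otimes> \<tau>) \<otimes> (a \<otimes> \<tau>) = \<one>"
    using a_carrier \<tau> by simp
  then show ?thesis
    using a W_eq \<tau> a_carrier Z_eps Z_Ad_triv
    by (simp add: zstar_Pair GPairs_iff eps_mult Ad_mult Zminus_iff)
qed

lemma zstar_zstar: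
  "a \<in> carrier G \<Longrightarrow> b \<in> carrier G \<Longrightarrow> snd W \<in> carrier G \<Longrightarrow>
    zstar G a (zstar G b W) = zstar G (a \<otimes> b) W"
  by (cases W) (simp add: zstar_Pair m_assoc)

lemma zstar_one: "snd W \<in> carrier G \<Longrightarrow> zstar G \<one> W = W"
  by (cases W) (simp add: zstar_Pair)

lemma zstar_gact_Gdown:
  assumes "a \<in> Zminus G Z \<sigma>" "g \<in> carrier G" "eps g = -1" "snd W \<in> carrier G"
  shows "zstar G a (gact G eps Ad g W) = gact G eps Ad g (zstar G (inv a) W)"
  using assms Zminus_swap_inv[of a g] Zminus_carrier[of a]
  by (cases W) (simp add: zstar_Pair gact_Pair m_assoc[symmetric])

lemma tcompl_not_involutive:
  "a \<in> carrier G \<Longrightarrow> a \<otimes> a \<noteq> \<one> \<Longrightarrow> \<exists>W\<in>GPairs G eps Ad. tcompl G a (tcompl G a W) \<noteq> W"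
  using base_point sigma(1) tcompl_tcompl_eq_iff by blast

lemma tcompl_closed:
  "a \<in> Zminus G Z \<sigma> \<Longrightarrow> W \<in> GPairs G eps Ad \<Longrightarrow> tcompl G a W \<in> GPairs G eps Ad"
  by (simp add: tcompl_eq_zstar_compl zstar_closed compl_closed)

lemma tact_Gup: "g \<in> carrier G \<Longrightarrow> eps g = 1 \<Longrightarrow> tact G eps Ad a g W = gact G eps Ad g W"
  by (simp add: tact_def Gup_iff)

lemma tact_Gdown:
  "g \<in> carrier G \<Longrightarrow> eps g = -1 \<Longrightarrow> tact G eps Ad a g W = gact G eps Ad g (zstar G (inv a) W)"
  by (simp add: tact_def Gup_iff)

lemma tact_closed:
  assumes "a \<in> Zminus G Z \<sigma>" "g \<in> carrier G" "W \<in> GPairs G eps Ad"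
  shows "tact G eps Ad a g W \<in> GPairs G eps Ad"
  using assms eps_val gact_closed zstar_closed[OF Zminus_inv_closed] tact_Gup tact_Gdown
  by metis

lemma tact_one: "W \<in> GPairs G eps Ad \<Longrightarrow> tact G eps Ad a \<one> W = W"
  by (simp add: tact_Gup eps_one gact_one GPairs_snd_carrier)

lemma tact_mult:
  assumes a: "a \<in> Zminus G Z \<sigma>" and g: "g \<in> carrier G" and h: "h \<in> carrier G"
    and W: "W \<in> GPairs G eps Ad"
  shows "tact G eps Ad a (g \<otimes> h) W = tact G eps Ad a g (tact G eps Ad a h W)"
proof -
  have a_carrier: "a \<in> carrier G" "inv a \<in> carrier G" "inv a \<in> Z"
    using a Zminus_carrier Z_inv_closed by (auto simp: Zminus_iff)
  have W_carrier: "snd W \<in> carrier G" "snd (zstar G (inv a) W) \<in> carrier G"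
    using GPairs_snd_carrier[OF W] a_carrier by (cases W, simp add: zstar_Pair)+
  consider "eps g = 1" "eps h = 1" | "eps g = 1" "eps h = -1"
    | "eps g = -1" "eps h = 1" | "eps g = -1" "eps h = -1"
    using eps_val g h by blast
  then show ?thesis
  proof cases
    case 4
    have "tact G eps Ad a g (tact G eps Ad a h W)
        = gact G eps Ad g (gact G eps Ad h (zstar G (inv (inv a)) (zstar G (inv a) W)))"
      using 4 g h zstar_gact_Gdown[OF Zminus_inv_closed[OF a] h _ W_carrier(2)]
      by (simp add: tact_Gdown)
    also have "\<dots> = tact G eps Ad a (g \<otimes> h) W"
      using 4 g h a_carrier W_carrier by (simp add: tact_Gup eps_mult gact_mult zstar_zstar zstar_one)
    finally show ?thesis by simp
  qed (use g h W_carrier a_carrier in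
        \<open>simp_all add: tact_Gup tact_Gdown eps_mult gact_mult zstar_gact_Gup\<close>)
qed

lemma twisted_group_action:
  "a \<in> Zminus G Z \<sigma> \<Longrightarrow>
    group_action G (GPairs G eps Ad) (\<lambda>g. restrict (tact G eps Ad a g) (GPairs G eps Ad))"
  by (rule group_action_restrictI[OF is_group]) (auto intro: tact_closed tact_one tact_mult)

lemma tcompl_eq_tact:
  assumes a: "a \<in> Zminus G Z \<sigma>" and W: "(x1, \<sigma>1) \<in> GPairs G eps Ad"
  shows "tcompl G a (x1, \<sigma>1) = tact G eps Ad a \<sigma>1 (x1, \<sigma>1)"
proof -
  have \<sigma>1: "\<sigma>1 \<in> carrier G" "eps \<sigma>1 = -1" "\<sigma>1 \<otimes> \<sigma>1 = \<one>" "Ad \<sigma>1 x1 = x1"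
    using W by (auto simp: GPairs_iff)
  then have "inv \<sigma>1 = \<sigma>1" using inv_equality by simp
  then have "\<sigma>1 \<otimes> (inv a \<otimes> \<sigma>1) \<otimes> inv \<sigma>1 = \<sigma>1 \<otimes> inv a"
    using \<sigma>1 Zminus_carrier[OF a] by (simp add: m_assoc)
  also have "\<dots> = a \<otimes> \<sigma>1" using Zminus_swap_inv[OF a \<sigma>1(1,2)] .
  finally show ?thesis
    using \<sigma>1 by (simp add: tact_Gdown tcompl_def zstar_Pair gact_Pair)
qed

lemma tact_Wplus_closed:
  assumes a: "a \<in> Zminus G Z \<sigma>" and twist: "tcompl G a (x, \<sigma>) \<in> Wplus"
    and g: "g \<in> carrier G" and W1: "W1 \<in> Wplus"
  shows "tact G eps Ad a g W1 \<in> Wplus"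
proof -
  obtain k where k: "k \<in> carrier G" "eps k = 1" "tcompl G a (x, \<sigma>) = gact G eps Ad k (x, \<sigma>)"
    using twist by (auto simp: Gup_iff)
  obtain h where h: "h \<in> carrier G" "eps h = 1" and W1_eq: "W1 = gact G eps Ad h (x, \<sigma>)"
    using W1 by (auto simp: Gup_iff)
  have gh: "g \<otimes> h \<in> carrier G" using g h by simp
  have "tact G eps Ad a g W1 = tact G eps Ad a (g \<otimes> h) (x, \<sigma>)"
    using tact_mult[OF a g h(1) base_point] tact_Gup[OF h] W1_eq by simp
  also have "\<dots> \<in> Wplus"
  proof (cases "eps (g \<otimes> h) = 1")
    case True
    then show ?thesis using tact_Gup[OF gh True] gh by (auto simp: Gup_iff)
  next
    case False
    \<comment> \<open>write g h = m \<sigma> with m even and use that \<sigma> acts as the twisted complement\<close>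
    define m where "m = g \<otimes> h \<otimes> \<sigma>"
    have m: "m \<in> carrier G" "eps m = 1" "g \<otimes> h = m \<otimes> \<sigma>"
      using False eps_Gdown[OF gh] gh sigma by (simp_all add: m_def eps_mult m_assoc)
    have "tact G eps Ad a (g \<otimes> h) (x, \<sigma>) = gact G eps Ad m (tact G eps Ad a \<sigma> (x, \<sigma>))"
      using tact_mult[OF a m(1) sigma(1) base_point] tact_Gup[OF m(1,2)] m(3) by simp
    also have "\<dots> = gact G eps Ad (m \<otimes> k) (x, \<sigma>)"
      using tcompl_eq_tact[OF a base_point] k m sigma by (simp add: gact_mult)
    finally show ?thesis using m k by (auto simp: Gup_iff eps_mult)
  qed
  finally show ?thesis .
qed

section \<open>The boundary map and the orbit criteria\<close>

lemma bdry_carrier: "g \<in> carrier G \<Longrightarrow> bdry G \<sigma> g \<in> carrier G"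
  using sigma by (simp add: bdry_def)

lemma conj_sigma_eq_bdry: "g \<in> carrier G \<Longrightarrow> g \<otimes> \<sigma> \<otimes> inv g = bdry G \<sigma> g \<otimes> \<sigma>"
  using sigma by (simp add: bdry_def m_assoc)

lemma bdry_in_Zminus: "g \<in> carrier G \<Longrightarrow> bdry G \<sigma> g \<in> Z \<Longrightarrow> bdry G \<sigma> g \<in> Zminus G Z \<sigma>"
  using sigma by (simp add: Zminus_iff bdry_def m_assoc inv_mult_group sigma_inv)

lemma bdry_one: "bdry G \<sigma> \<one> = \<one>"
  using sigma by (simp add: bdry_def)

lemma bdry_mult:
  assumes g: "g \<in> carrier G" "eps g = 1" and h: "h \<in> carrier G" and hZ: "bdry G \<sigma> h \<in> Z"
  shows "bdry G \<sigma> (g \<otimes> h) = bdry G \<sigma> h \<otimes> bdry G \<sigma> g"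
proof -
  have "bdry G \<sigma> (g \<otimes> h) = g \<otimes> (h \<otimes> \<sigma> \<otimes> inv h) \<otimes> (inv g \<otimes> \<sigma>)"
    using g h sigma by (simp add: bdry_def m_assoc inv_mult_group)
  also have "\<dots> = (g \<otimes> bdry G \<sigma> h) \<otimes> (\<sigma> \<otimes> inv g \<otimes> \<sigma>)"
    using g h sigma bdry_carrier[OF h] by (simp only: conj_sigma_eq_bdry) (simp add: m_assoc)
  also have "\<dots> = bdry G \<sigma> h \<otimes> bdry G \<sigma> g"
    using g h sigma bdry_carrier[OF h]
    by (simp only: Z_commute[OF hZ g, symmetric]) (simp add: bdry_def m_assoc)
  finally show ?thesis .
qed

lemma bdry_inv:
  assumes g: "g \<in> carrier G" "eps g = 1" and gZ: "bdry G \<sigma> g \<in> Z"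
  shows "bdry G \<sigma> (inv g) = inv (bdry G \<sigma> g)"
proof -
  have "bdry G \<sigma> g \<otimes> bdry G \<sigma> (inv g) = \<one>"
    using bdry_mult[of "inv g" g] g gZ eps_inv bdry_one by simp
  then show ?thesis
    using inv_equality[symmetric] inv_comm bdry_carrier g by simp
qed

lemma gact_base_point:
  "k \<in> carrier G \<Longrightarrow> gact G eps Ad k (x, \<sigma>) = (eps k *\<^sub>R Ad k x, bdry G \<sigma> k \<otimes> \<sigma>)"
  by (simp add: gact_Pair conj_sigma_eq_bdry)

lemma qact_base_point:
  "k \<in> carrier G \<Longrightarrow> qact k (x, qmap G Z \<sigma>) = (eps k *\<^sub>R Ad k x, qmap G Z (bdry G \<sigma> k \<otimes> \<sigma>))"
  using qact_Pair[of k \<sigma> x] sigma by (simp add: conj_sigma_eq_bdry)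

lemma qmap_bdry_eq_iff:
  "k \<in> carrier G \<Longrightarrow> qmap G Z (bdry G \<sigma> k \<otimes> \<sigma>) = qmap G Z \<sigma> \<longleftrightarrow> bdry G \<sigma> k \<in> Z"
  using rcos_eq_iff[of "bdry G \<sigma> k \<otimes> \<sigma>" \<sigma>] sigma bdry_carrier[of k]
  by (simp add: qmap_def m_assoc)

lemma tcompl_in_Wplus_iff:
  assumes \<gamma>: "\<gamma> \<in> carrier G"
  shows "tcompl G \<gamma> (x, \<sigma>) \<in> Wplus \<longleftrightarrow>
    (\<exists>k\<in>carrier G. eps k = 1 \<and> Ad k x = - x \<and> bdry G \<sigma> k = \<gamma>)"
proof -
  have "tcompl G \<gamma> (x, \<sigma>) = gact G eps Ad k (x, \<sigma>) \<longleftrightarrow> Ad k x = - x \<and> bdry G \<sigma> k = \<gamma>"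
    if k: "k \<in> carrier G" "eps k = 1" for k
  proof -
    have "\<gamma> \<otimes> \<sigma> = bdry G \<sigma> k \<otimes> \<sigma> \<longleftrightarrow> \<gamma> = bdry G \<sigma> k"
      using right_cancel \<gamma> bdry_carrier[OF k(1)] sigma(1) by blast
    then show ?thesis using k by (auto simp: tcompl_def gact_base_point)
  qed
  then show ?thesis
    unfolding image_iff Bex_def Gup_iff by blast
qed

lemma compl_in_quotient_orbit_iff:
  "(- x, qmap G Z \<sigma>) \<in> (\<lambda>g. qact g (x, qmap G Z \<sigma>)) ` Gup G eps \<longleftrightarrow>
     (\<exists>k\<in>carrier G. eps k = 1 \<and> Ad k x = - x \<and> bdry G \<sigma> k \<in> Z)"
proof -
  have "(- x, qmap G Z \<sigma>) = qact k (x, qmap G Z \<sigma>) \<longleftrightarrow> Ad k x = - x \<and> bdry G \<sigma> k \<in> Z"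
    if k: "k \<in> carrier G" "eps k = 1" for k
    using k qmap_bdry_eq_iff[OF k(1)] by (auto simp: qact_base_point)
  then show ?thesis
    unfolding image_iff Bex_def Gup_iff by blast
qed

lemma GupStab_iff:
  "g \<in> GupStab G eps Ad Z (x, qmap G Z \<sigma>) \<longleftrightarrow>
     g \<in> carrier G \<and> eps g = 1 \<and> Ad g x = x \<and> bdry G \<sigma> g \<in> Z"
  by (auto simp: GupStab_def Gup_iff qact_base_point qmap_bdry_eq_iff)

lemma some_tcompl_in_Wplus_iff:
  "(\<exists>\<alpha>\<in>Zminus G Z \<sigma>. tcompl G \<alpha> (x, \<sigma>) \<in> Wplus) \<longleftrightarrow>
     (- x, qmap G Z \<sigma>) \<in> (\<lambda>g. qact g (x, qmap G Z \<sigma>)) ` Gup G eps"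
  using tcompl_in_Wplus_iff Zminus_carrier bdry_in_Zminus
  by (auto simp: compl_in_quotient_orbit_iff Zminus_iff)

lemma tcompl_in_Wplus_iff_Z2:
  assumes \<alpha>: "\<alpha> \<in> Zminus G Z \<sigma>" and twist: "tcompl G \<alpha> (x, \<sigma>) \<in> Wplus"
    and \<beta>: "\<beta> \<in> Zminus G Z \<sigma>"
  shows "tcompl G \<beta> (x, \<sigma>) \<in> Wplus \<longleftrightarrow> inv \<beta> \<otimes> \<alpha> \<in> bdry G \<sigma> ` GupStab G eps Ad Z (x, qmap G Z \<sigma>)"
proof -
  have \<alpha>': "\<alpha> \<in> carrier G" "\<alpha> \<in> Z" and \<beta>': "\<beta> \<in> carrier G" "\<beta> \<in> Z"
    using \<alpha> \<beta> Zminus_carrier by (auto simp: Zminus_iff)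
  obtain k where k: "k \<in> carrier G" "eps k = 1" "Ad k x = - x" "bdry G \<sigma> k = \<alpha>"
    using twist tcompl_in_Wplus_iff[OF \<alpha>'(1)] by blast
  \<comment> \<open>elements realising the twists \<alpha> and \<beta> differ by an element of the stabiliser\<close>
  show ?thesis
  proof
    assume "tcompl G \<beta> (x, \<sigma>) \<in> Wplus"
    then obtain m where m: "m \<in> carrier G" "eps m = 1" "Ad m x = - x" "bdry G \<sigma> m = \<beta>"
      using tcompl_in_Wplus_iff[OF \<beta>'(1)] by blast
    define g where "g = inv m \<otimes> k"
    have g: "g \<in> carrier G" "eps g = 1"
      using m k by (simp_all add: g_def eps_mult eps_inv)
    have "bdry G \<sigma> g = \<alpha> \<otimes> inv \<beta>"
      using bdry_mult[of "inv m" k] bdry_inv[of m] m k \<alpha>' \<beta>' by (simp add: g_def eps_inv)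
    also have "\<dots> = inv \<beta> \<otimes> \<alpha>"
      using Z_commute_Z[OF \<alpha>'(2) Z_inv_closed[OF \<beta>'(2)]] .
    finally have bdry_g: "bdry G \<sigma> g = inv \<beta> \<otimes> \<alpha>" .
    have "Ad g x = x"
      using m k Ad_inv_cancel[OF m(1), of x] by (simp add: g_def Ad_mult)
    then have "g \<in> GupStab G eps Ad Z (x, qmap G Z \<sigma>)"
      using g bdry_g Z_mult_closed[OF Z_inv_closed[OF \<beta>'(2)] \<alpha>'(2)] by (simp add: GupStab_iff)
    then show "inv \<beta> \<otimes> \<alpha> \<in> bdry G \<sigma> ` GupStab G eps Ad Z (x, qmap G Z \<sigma>)"
      using bdry_g by force
  next
    assume "inv \<beta> \<otimes> \<alpha> \<in> bdry G \<sigma> ` GupStab G eps Ad Z (x, qmap G Z \<sigma>)"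
    then obtain g where g: "g \<in> carrier G" "eps g = 1" "Ad g x = x" "bdry G \<sigma> g \<in> Z"
      and bdry_g: "bdry G \<sigma> g = inv \<beta> \<otimes> \<alpha>"
      by (auto simp: GupStab_iff)
    define m where "m = k \<otimes> inv g"
    have m: "m \<in> carrier G" "eps m = 1"
      using g k by (simp_all add: m_def eps_mult eps_inv)
    have bdry_inv_g: "bdry G \<sigma> (inv g) = inv (inv \<beta> \<otimes> \<alpha>)"
      using bdry_inv g bdry_g by simp
    have "bdry G \<sigma> m = inv (inv \<beta> \<otimes> \<alpha>) \<otimes> \<alpha>"
      using bdry_mult[of k "inv g"] bdry_inv_g Z_inv_closed[OF g(4)] bdry_inv g k
      by (simp add: m_def)
    also have "\<dots> = \<beta>"
      using \<alpha>' \<beta>' Z_commute_Z[OF \<beta>'(2) \<alpha>'(2)]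
      by (simp add: inv_mult_group m_assoc) (simp add: m_assoc[symmetric])
    finally have "bdry G \<sigma> m = \<beta>" .
    moreover have "Ad m x = - x"
      using g k Ad_inv_cancel[OF g(1), of x] by (simp add: m_def Ad_mult Ad_minus)
    ultimately show "tcompl G \<beta> (x, \<sigma>) \<in> Wplus"
      using tcompl_in_Wplus_iff[OF \<beta>'(1)] m by blast
  qed
qed

lemma tact_change_twist:
  assumes \<alpha>: "\<alpha> \<in> Zminus G Z \<sigma>" and \<beta>: "\<beta> \<in> Zminus G Z \<sigma>"
    and g: "g \<in> carrier G" "eps g = -1" and W: "W \<in> GPairs G eps Ad"
  shows "tact G eps Ad \<beta> g W = zstar G (\<beta> \<otimes> inv \<alpha>) (tact G eps Ad \<alpha> g W)"
proof -
  have \<alpha>': "\<alpha> \<in> carrier G" "\<alpha> \<in> Z" and \<beta>': "\<beta> \<in> carrier G" "\<beta> \<in> Z"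
    using \<alpha> \<beta> Zminus_carrier by (auto simp: Zminus_iff)
  have W_carrier: "snd W \<in> carrier G" "snd (zstar G (inv \<alpha>) W) \<in> carrier G"
    using GPairs_snd_carrier[OF W] \<alpha>' by (cases W, simp add: zstar_Pair)+
  have "zstar G (\<beta> \<otimes> inv \<alpha>) (tact G eps Ad \<alpha> g W)
      = gact G eps Ad g (zstar G (inv (\<beta> \<otimes> inv \<alpha>) \<otimes> inv \<alpha>) W)"
    using zstar_gact_Gdown[OF Zminus_mult_closed[OF \<beta> Zminus_inv_closed[OF \<alpha>]] g W_carrier(2)]
      g \<alpha>' \<beta>' W_carrier(1)
    by (simp add: tact_Gdown zstar_zstar)
  also have "inv (\<beta> \<otimes> inv \<alpha>) \<otimes> inv \<alpha> = inv \<beta>"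
    using \<alpha>' \<beta>' Z_commute_Z[OF \<alpha>'(2) Z_inv_closed[OF \<beta>'(2)]]
    by (simp add: inv_mult_group) (simp add: m_assoc)
  finally show ?thesis
    using g by (simp add: tact_Gdown)
qed

end


theorem lemma2p18:
  fixes G :: "('g, 'm) monoid_scheme"
    and eps :: "'g \<Rightarrow> real"
    and Ad :: "'g \<Rightarrow> 'v::euclidean_space \<Rightarrow> 'v"
    and Z :: "'g set"
    and x :: 'v and \<sigma> :: 'g
  assumes grp: "group G"
    and eps_val: "\<forall>g\<in>carrier G. eps g = 1 \<or> eps g = -1"
    and eps_hom: "\<forall>g\<in>carrier G. \<forall>h\<in>carrier G. eps (g \<otimes>\<^bsub>G\<^esub> h) = eps g * eps h"
    and Ad_lin: "\<forall>g\<in>carrier G. linear (Ad g)"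
    and Ad_one: "Ad \<one>\<^bsub>G\<^esub> = id"
    and Ad_hom: "\<forall>g\<in>carrier G. \<forall>h\<in>carrier G. Ad (g \<otimes>\<^bsub>G\<^esub> h) = Ad g \<circ> Ad h"
    and Z_sub: "Z \<subseteq> Gup G eps"
    and Z_central: "\<forall>z\<in>Z. \<forall>g\<in>Gup G eps. z \<otimes>\<^bsub>G\<^esub> g = g \<otimes>\<^bsub>G\<^esub> z"
    and Z_normal: "Z \<lhd> G"
    and Z_Ad_triv: "\<forall>z\<in>Z. Ad z = id"
    and GG_ne: "GPairs G eps Ad \<noteq> {}"
    and W_in: "(x, \<sigma>) \<in> GPairs G eps Ad"
  shows "\<forall>\<alpha>\<in>Zminus G Z \<sigma>.
    let GG = GPairs G eps Ad;
        W = (x, \<sigma>);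
        Wq = (x, qmap G Z \<sigma>);
        Wplus = (\<lambda>g. gact G eps Ad g W) ` Gup G eps;
        Zm = Zminus G Z \<sigma>;
        Z2 = bdry G \<sigma> ` GupStab G eps Ad Z Wq
    in
    \<comment> \<open>(a)\<close>
    (\<forall>x1 \<sigma>1. (x1, \<sigma>1) \<in> GG \<longrightarrow> qG G Z (tcompl G \<alpha> (x1, \<sigma>1)) = (- x1, qmap G Z \<sigma>1))
    \<comment> \<open>(b)\<close>
    \<and> (\<alpha> \<otimes>\<^bsub>G\<^esub> \<alpha> \<noteq> \<one>\<^bsub>G\<^esub> \<longrightarrow> (\<exists>W1\<in>GG. tcompl G \<alpha> (tcompl G \<alpha> W1) \<noteq> W1))
    \<comment> \<open>(c)\<close>
    \<and> (\<forall>W1\<in>GG. tcompl G \<alpha> W1 \<in> GG)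
    \<and> (\<forall>g\<in>Gup G eps. \<forall>W1\<in>GG.
          tcompl G \<alpha> (gact G eps Ad g W1) = gact G eps Ad g (tcompl G \<alpha> W1))
    \<comment> \<open>(d)\<close>
    \<and> (\<forall>W1\<in>GG. tcompl G \<alpha> W1 = zstar G \<alpha> (compl W1))
    \<comment> \<open>(e)\<close>
    \<and> group_action G GG (\<lambda>g. restrict (tact G eps Ad \<alpha> g) GG)
    \<and> (\<forall>x1 \<sigma>1. (x1, \<sigma>1) \<in> GG \<longrightarrow> tcompl G \<alpha> (x1, \<sigma>1) = tact G eps Ad \<alpha> \<sigma>1 (x1, \<sigma>1))
    \<and> (tcompl G \<alpha> W \<in> Wplus \<longrightarrow>
         (\<forall>g\<in>carrier G. \<forall>W1\<in>Wplus. tact G eps Ad \<alpha> g W1 \<in> Wplus))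
    \<comment> \<open>(f)\<close>
    \<and> ((\<exists>\<alpha>'\<in>Zm. tcompl G \<alpha>' W \<in> Wplus) \<longleftrightarrow>
         (- x, qmap G Z \<sigma>) \<in> (\<lambda>g. gact (G Mod Z) (eps_q eps) (Ad_q Ad) (qmap G Z g) Wq) ` Gup G eps)
    \<and> (tcompl G \<alpha> W \<in> Wplus \<longrightarrow>
         (\<forall>\<beta>\<in>Zm. (tcompl G \<beta> W \<in> Wplus \<longleftrightarrow> inv\<^bsub>G\<^esub> \<beta> \<otimes>\<^bsub>G\<^esub> \<alpha> \<in> Z2)
            \<and> (tcompl G \<beta> W \<in> Wplus \<longrightarrow>
                 (\<forall>g\<in>Gdown G eps. \<forall>W1\<in>GG.
                    tact G eps Ad \<beta> g W1
                      = zstar G (\<beta> \<otimes>\<^bsub>G\<^esub> inv\<^bsub>G\<^esub> \<alpha>) (tact G eps Ad \<alpha> g W1)))))"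
proof -
  interpret pointed_graded_group G eps Ad Z x \<sigma>
    using grp eps_val eps_hom Ad_lin Ad_one Ad_hom Z_sub Z_central Z_normal Z_Ad_triv W_in
    by (simp add: pointed_graded_group_def pointed_graded_group_axioms_def
        graded_group_mod_central_def graded_group_mod_central_axioms_def
        graded_group_def graded_group_axioms_def)
  show ?thesis
    unfolding Let_def
    apply (intro ballI conjI allI impI)
    subgoal by (rule qG_tcompl) (simp_all add: Zminus_iff GPairs_iff)
    subgoal by (rule tcompl_not_involutive[OF Zminus_carrier])
    subgoal by (rule tcompl_closed)
    subgoal by (rule tcompl_gact_Gup) (simp_all add: Zminus_iff Gup_iff)
    subgoal by (rule tcompl_eq_zstar_compl)
    subgoal by (rule twisted_group_action)
    subgoal by (rule tcompl_eq_tact)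
    subgoal by (rule tact_Wplus_closed)
    subgoal by (rule some_tcompl_in_Wplus_iff)
    subgoal by (rule tcompl_in_Wplus_iff_Z2)
    subgoal by (rule tact_change_twist) (simp_all add: Gdown_iff)
    done
qed

end
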